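(* There exist a finite structure $\mathcal{A}$ and an $\omega$-categorical structure $\mathcal{B}$ over the same finite relational signature such that $\Pi_2\text{-}\mathrm{CSP}(\mathcal{A}) \subseteq \Pi_2\text{-}\mathrm{CSP}(\mathcal{B})$ but $\mathrm{QCSP}(\mathcal{A}) \not\subseteq \mathrm{QCSP}(\mathcal{B})$.
   Context: A countably infinite structure is $\omega$-categorical if it is, up to isomorphism, the unique countable model of its first-order theory. A positive Horn (pH) sentence is a first-order sentence built from atoms (relational and equalities) using only $\exists,\forall,\wedge$. $\mathrm{QCSP}(\mathcal{A})$ is the set of pH sentences true in $\mathcal{A}$, and $\Pi_2\text{-}\mathrm{CSP}(\mathcal{A})$ is the set of pH sentences of the form $\forall\bar x\exists\bar y\,P$ ($P$ a conjunction of atoms) true in $\mathcal{A}$. *)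

theory Defs
  imports Main "HOL-Library.Countable_Set"
begin

text \<open>A relational signature assigns to (some) relation symbols, coded as naturals,
  an arity. It is finite iff its domain is finite.\<close>
type_synonym signature = "nat \<Rightarrow> nat option"

record 'a struc =
  univ :: "'a set"
  rel :: "nat \<Rightarrow> 'a list \<Rightarrow> bool"

definition is_struc :: "signature \<Rightarrow> 'a struc \<Rightarrow> bool" where
  "is_struc \<sigma> M \<longleftrightarrow> univ M \<noteq> {} \<and>
     (\<forall>r xs. rel M r xs \<longrightarrow> \<sigma> r = Some (length xs) \<and> set xs \<subseteq> univ M)"

datatype fm =
    Atom nat "nat list"
  | Eq nat nat
  | Neg fm
  | Conj fm fm
  | Disj fm fm
  | Ex nat fm
  | All nat fm

fun fv :: "fm \<Rightarrow> nat set" where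
  "fv (Atom r xs) = set xs"
| "fv (Eq x y) = {x, y}"
| "fv (Neg \<phi>) = fv \<phi>"
| "fv (Conj \<phi> \<psi>) = fv \<phi> \<union> fv \<psi>"
| "fv (Disj \<phi> \<psi>) = fv \<phi> \<union> fv \<psi>"
| "fv (Ex x \<phi>) = fv \<phi> - {x}"
| "fv (All x \<phi>) = fv \<phi> - {x}"

fun wf_fm :: "signature \<Rightarrow> fm \<Rightarrow> bool" where
  "wf_fm \<sigma> (Atom r xs) = (\<sigma> r = Some (length xs))"
| "wf_fm \<sigma> (Eq x y) = True"
| "wf_fm \<sigma> (Neg \<phi>) = wf_fm \<sigma> \<phi>"
| "wf_fm \<sigma> (Conj \<phi> \<psi>) = (wf_fm \<sigma> \<phi> \<and> wf_fm \<sigma> \<psi>)"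
| "wf_fm \<sigma> (Disj \<phi> \<psi>) = (wf_fm \<sigma> \<phi> \<and> wf_fm \<sigma> \<psi>)"
| "wf_fm \<sigma> (Ex x \<phi>) = wf_fm \<sigma> \<phi>"
| "wf_fm \<sigma> (All x \<phi>) = wf_fm \<sigma> \<phi>"

definition sentence :: "signature \<Rightarrow> fm \<Rightarrow> bool" where
  "sentence \<sigma> \<phi> \<longleftrightarrow> wf_fm \<sigma> \<phi> \<and> fv \<phi> = {}"

fun sat :: "'a struc \<Rightarrow> (nat \<Rightarrow> 'a) \<Rightarrow> fm \<Rightarrow> bool" where
  "sat M e (Atom r xs) = rel M r (map e xs)"
| "sat M e (Eq x y) = (e x = e y)"
| "sat M e (Neg \<phi>) = (\<not> sat M e \<phi>)"
| "sat M e (Conj \<phi> \<psi>) = (sat M e \<phi> \<and> sat M e \<psi>)"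
| "sat M e (Disj \<phi> \<psi>) = (sat M e \<phi> \<or> sat M e \<psi>)"
| "sat M e (Ex x \<phi>) = (\<exists>a\<in>univ M. sat M (e(x := a)) \<phi>)"
| "sat M e (All x \<phi>) = (\<forall>a\<in>univ M. sat M (e(x := a)) \<phi>)"

definition holds :: "'a struc \<Rightarrow> fm \<Rightarrow> bool" where
  "holds M \<phi> \<longleftrightarrow> (\<forall>e. (\<forall>x. e x \<in> univ M) \<longrightarrow> sat M e \<phi>)"

definition iso :: "signature \<Rightarrow> 'a struc \<Rightarrow> 'b struc \<Rightarrow> bool" where
  "iso \<sigma> M N \<longleftrightarrow> (\<exists>h. bij_betw h (univ M) (univ N) \<and>
     (\<forall>r n xs. \<sigma> r = Some n \<longrightarrow> length xs = n \<longrightarrow> set xs \<subseteq> univ M \<longrightarrow>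
        (rel M r xs \<longleftrightarrow> rel N r (map h xs))))"

text \<open>Countable structures are represented (up to isomorphism) on subsets of nat.\<close>
definition omega_categorical :: "signature \<Rightarrow> 'a struc \<Rightarrow> bool" where
  "omega_categorical \<sigma> B \<longleftrightarrow>
     is_struc \<sigma> B \<and> countable (univ B) \<and> infinite (univ B) \<and>
     (\<forall>M :: nat struc. is_struc \<sigma> M \<and>
        (\<forall>\<phi>. sentence \<sigma> \<phi> \<longrightarrow> holds B \<phi> \<longrightarrow> holds M \<phi>) \<longrightarrow> iso \<sigma> M B)"

inductive pH :: "fm \<Rightarrow> bool" where
  "pH (Atom r xs)"
| "pH (Eq x y)"
| "pH \<phi> \<Longrightarrow> pH \<psi> \<Longrightarrow> pH (Conj \<phi> \<psi>)"
| "pH \<phi> \<Longrightarrow> pH (Ex x \<phi>)"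
| "pH \<phi> \<Longrightarrow> pH (All x \<phi>)"

inductive conj_atoms :: "fm \<Rightarrow> bool" where
  "conj_atoms (Atom r xs)"
| "conj_atoms (Eq x y)"
| "conj_atoms \<phi> \<Longrightarrow> conj_atoms \<psi> \<Longrightarrow> conj_atoms (Conj \<phi> \<psi>)"

inductive ex_block :: "fm \<Rightarrow> bool" where
  "conj_atoms \<phi> \<Longrightarrow> ex_block \<phi>"
| "ex_block \<phi> \<Longrightarrow> ex_block (Ex y \<phi>)"

inductive pi2_form :: "fm \<Rightarrow> bool" where
  "ex_block \<phi> \<Longrightarrow> pi2_form \<phi>"
| "pi2_form \<phi> \<Longrightarrow> pi2_form (All x \<phi>)"

definition QCSP :: "signature \<Rightarrow> 'a struc \<Rightarrow> fm set" where
  "QCSP \<sigma> A = {\<phi>. sentence \<sigma> \<phi> \<and> pH \<phi> \<and> holds A \<phi>}"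

definition Pi2_CSP :: "signature \<Rightarrow> 'a struc \<Rightarrow> fm set" where
  "Pi2_CSP \<sigma> A = {\<phi>. sentence \<sigma> \<phi> \<and> pi2_form \<phi> \<and> holds A \<phi>}"

end

theory Submission
  imports Defs
begin

text \<open>Take for \<open>A\<close> the two-element structure on \<open>{0, 1}\<close> whose edges are \<open>(0, 0)\<close> and
  \<open>(0, 1)\<close>, and for \<open>B\<close> the complement of the perfect matching \<open>{2k, 2k+1}\<close> on \<open>\<nat>\<close>.
  The pH sentence \<open>\<exists>x \<forall>y. R(x, y)\<close> holds in \<open>A\<close> but not in \<open>B\<close>, where every vertex misses
  its mate. \<open>B\<close> is \<open>\<omega>\<close>-categorical: its theory says that \<open>R\<close> is reflexive, that every
  vertex has exactly one non-neighbour, symmetrically, and that there are infinitely many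
  vertices, and any two fixed-point-free involutions of countably infinite sets are conjugate.

  For the \<open>\<Pi>\<^sub>2\<close> inclusion fix values in \<open>B\<close> for the universal variables, forming a finite
  set \<open>I\<close>. The map \<open>A\<^sup>I \<rightarrow> B\<close> sending a vector to the least index in \<open>I\<close> where it is non-zero,
  and the zero vector to a vertex \<open>c\<close> whose mate lies outside \<open>I\<close>, is a homomorphism: the
  source of every edge of \<open>A\<close> is \<open>0\<close>, so every edge of \<open>A\<^sup>I\<close> starts at the zero vector.
  Primitive positive formulas true in every factor of a power are true at the image under a
  homomorphism, and evaluating the universal variables in \<open>A\<close> by indicator functions turns
  the given values into unit vectors.\<close>

lemma sat_cong_fv:
  assumes "\<forall>x\<in>fv \<phi>. e x = e' x"
  shows "sat M e \<phi> = sat M e' \<phi>"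
  using assms
proof (induction \<phi> arbitrary: e e')
  case (Atom r xs)
  then have "map e xs = map e' xs" by (simp add: map_eq_conv)
  then show ?case by (simp only: sat.simps)
next
  case (Ex x \<phi>)
  have "sat M (e(x := a)) \<phi> = sat M (e'(x := a)) \<phi>" for a
    by (rule Ex.IH) (use Ex.prems in auto)
  then show ?case by simp
next
  case (All x \<phi>)
  have "sat M (e(x := a)) \<phi> = sat M (e'(x := a)) \<phi>" for a
    by (rule All.IH) (use All.prems in auto)
  then show ?case by simp
next
  case (Conj \<phi> \<psi>)
  have "sat M e \<phi> = sat M e' \<phi>" "sat M e \<psi> = sat M e' \<psi>"
    by (rule Conj.IH; use Conj.prems in auto)+
  then show ?case by simp
next
  case (Disj \<phi> \<psi>)
  have "sat M e \<phi> = sat M e' \<phi>" "sat M e \<psi> = sat M e' \<psi>"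
    by (rule Disj.IH; use Disj.prems in auto)+
  then show ?case by simp
qed auto

lemma finite_fv: "finite (fv \<phi>)"
  by (induction \<phi>) auto

definition power_hom :: "'i set \<Rightarrow> 'a struc \<Rightarrow> 'b struc \<Rightarrow> (('i \<Rightarrow> 'a) \<Rightarrow> 'b) \<Rightarrow> bool" where
  "power_hom I A B H \<longleftrightarrow>
     (\<forall>v. H v \<in> univ B) \<and>
     (\<forall>v w. (\<forall>i\<in>I. v i = w i) \<longrightarrow> H v = H w) \<and>
     (\<forall>r vs. (\<forall>i\<in>I. rel A r (map (\<lambda>v. v i) vs)) \<longrightarrow> rel B r (map H vs))"

lemma sat_power_hom_conj_atoms:
  assumes "power_hom I A B H" "conj_atoms \<psi>" "\<forall>i\<in>I. sat A (E i) \<psi>"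
  shows "sat B (\<lambda>x. H (\<lambda>i. E i x)) \<psi>"
  using assms(2,3)
proof (induction \<psi>)
  case (1 r xs)
  then have "\<forall>i\<in>I. rel A r (map (\<lambda>v. v i) (map (\<lambda>x i. E i x) xs))"
    by (simp add: comp_def)
  then have "rel B r (map H (map (\<lambda>x i. E i x) xs))"
    using assms(1) unfolding power_hom_def by blast
  then show ?case by (simp add: comp_def)
next
  case (2 x y)
  then show ?case using assms(1) unfolding power_hom_def by simp
qed simp

lemma sat_power_hom_ex_block:
  assumes "power_hom I A B H" "ex_block \<psi>" "\<forall>i\<in>I. sat A (E i) \<psi>"
  shows "sat B (\<lambda>x. H (\<lambda>i. E i x)) \<psi>"
  using assms(2,3)
proof (induction \<psi> arbitrary: E)
  case (1 \<psi>)
  then show ?case using sat_power_hom_conj_atoms[OF assms(1)] by blast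
next
  case (2 \<psi> y)
  then obtain a where "\<forall>i\<in>I. sat A ((E i)(y := a i)) \<psi>"
    by simp metis
  then have "sat B (\<lambda>x. H (\<lambda>i. ((E i)(y := a i)) x)) \<psi>"
    by (rule "2.IH")
  moreover have "(\<lambda>x. H (\<lambda>i. ((E i)(y := a i)) x)) = (\<lambda>x. H (\<lambda>i. E i x))(y := H a)"
    by auto
  ultimately show ?case
    using assms(1) unfolding power_hom_def by auto
qed

lemma sat_pi2_form_transfer:
  assumes "pi2_form \<phi>" "\<forall>e. (\<forall>x. e x \<in> univ A) \<longrightarrow> sat A e \<phi>" "\<forall>x. e x \<in> univ B"
    and ex_block_transfer: "\<And>\<psi> e. ex_block \<psi> \<Longrightarrow> \<forall>e'. (\<forall>x. e' x \<in> univ A) \<longrightarrow> sat A e' \<psi> \<Longrightarrow>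
                              \<forall>x. e x \<in> univ B \<Longrightarrow> sat B e \<psi>"
  shows "sat B e \<phi>"
  using assms(1-3)
proof (induction \<phi> arbitrary: e)
  case (1 \<phi>)
  then show ?case using ex_block_transfer by blast
next
  case (2 \<phi> x)
  have "sat A e' \<phi>" if "\<forall>y. e' y \<in> univ A" for e'
    using "2.prems"(1) that fun_upd_triv[of e' x] by (metis sat.simps(7))
  then show ?case using "2.IH" "2.prems"(2) by simp
qed

lemma Pi2_CSP_subset_if_ex_block_transfer:
  assumes "\<And>\<psi> e. ex_block \<psi> \<Longrightarrow> \<forall>e'. (\<forall>x. e' x \<in> univ A) \<longrightarrow> sat A e' \<psi> \<Longrightarrow>
             \<forall>x. e x \<in> univ B \<Longrightarrow> sat B e \<psi>"
  shows "Pi2_CSP \<sigma> A \<subseteq> Pi2_CSP \<sigma> B"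
  unfolding Pi2_CSP_def holds_def using sat_pi2_form_transfer[OF _ _ _ assms] by blast

fun distinct_from :: "nat \<Rightarrow> nat \<Rightarrow> fm" where
  "distinct_from k 0 = Eq k k"
| "distinct_from k (Suc j) = Conj (Neg (Eq k j)) (distinct_from k j)"

fun pairwise_distinct :: "nat \<Rightarrow> fm" where
  "pairwise_distinct 0 = Eq 0 0"
| "pairwise_distinct (Suc n) = Conj (distinct_from n n) (pairwise_distinct n)"

fun ex_prefix :: "nat \<Rightarrow> fm \<Rightarrow> fm" where
  "ex_prefix 0 \<phi> = \<phi>"
| "ex_prefix (Suc m) \<phi> = Ex m (ex_prefix m \<phi>)"

text \<open>\<open>pairwise_distinct 0\<close> still mentions variable \<open>0\<close>, so \<open>at_least n\<close> binds the
  \<open>n + 1\<close> variables \<open>0, \<dots>, n\<close> although it only asserts that \<open>0, \<dots>, n - 1\<close> are distinct.\<close>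

definition at_least :: "nat \<Rightarrow> fm" where
  "at_least n = ex_prefix (Suc n) (pairwise_distinct n)"

lemma sat_distinct_from: "sat M e (distinct_from k j) \<longleftrightarrow> (\<forall>i<j. e k \<noteq> e i)"
  by (induction j) (auto simp: less_Suc_eq)

lemma sat_pairwise_distinct: "sat M e (pairwise_distinct n) \<longleftrightarrow> inj_on e {..<n}"
proof -
  have "sat M e (pairwise_distinct n) \<longleftrightarrow> (\<forall>k<n. \<forall>i<k. e k \<noteq> e i)"
    by (induction n) (auto simp: sat_distinct_from less_Suc_eq)
  also have "\<dots> \<longleftrightarrow> inj_on e {..<n}"
  proof
    assume "\<forall>k<n. \<forall>i<k. e k \<noteq> e i"
    then show "inj_on e {..<n}"
      by (intro inj_onI) (metis lessThan_iff linorder_neqE_nat)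
  next
    assume "inj_on e {..<n}"
    then show "\<forall>k<n. \<forall>i<k. e k \<noteq> e i"
      by (metis inj_on_contraD lessThan_iff less_imp_neq order.strict_trans)
  qed
  finally show ?thesis .
qed

lemma sat_ex_prefix:
  "sat M e (ex_prefix m \<phi>) \<longleftrightarrow>
     (\<exists>f. (\<forall>i<m. f i \<in> univ M) \<and> sat M (\<lambda>v. if v < m then f v else e v) \<phi>)"
proof (induction m arbitrary: e)
  case (Suc m)
  have upd: "(\<lambda>v. if v < m then f v else (e(m := a)) v) = (\<lambda>v. if v < Suc m then (f(m := a)) v else e v)"
    for f a by (auto simp: less_Suc_eq)
  have "sat M e (ex_prefix (Suc m) \<phi>) \<longleftrightarrow>
          (\<exists>a\<in>univ M. \<exists>f. (\<forall>i<m. f i \<in> univ M) \<and>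
             sat M (\<lambda>v. if v < Suc m then (f(m := a)) v else e v) \<phi>)"
    by (simp add: Suc.IH upd)
  also have "\<dots> \<longleftrightarrow>
          (\<exists>f. (\<forall>i<Suc m. f i \<in> univ M) \<and> sat M (\<lambda>v. if v < Suc m then f v else e v) \<phi>)"
  proof
    assume "\<exists>a\<in>univ M. \<exists>f. (\<forall>i<m. f i \<in> univ M) \<and>
             sat M (\<lambda>v. if v < Suc m then (f(m := a)) v else e v) \<phi>"
    then obtain a f where "a \<in> univ M" "\<forall>i<m. f i \<in> univ M"
      "sat M (\<lambda>v. if v < Suc m then (f(m := a)) v else e v) \<phi>" by blast
    then show "\<exists>f. (\<forall>i<Suc m. f i \<in> univ M) \<and> sat M (\<lambda>v. if v < Suc m then f v else e v) \<phi>"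
      by (intro exI[of _ "f(m := a)"]) (auto simp: less_Suc_eq)
  next
    assume "\<exists>f. (\<forall>i<Suc m. f i \<in> univ M) \<and> sat M (\<lambda>v. if v < Suc m then f v else e v) \<phi>"
    then obtain f where "\<forall>i<Suc m. f i \<in> univ M"
      "sat M (\<lambda>v. if v < Suc m then f v else e v) \<phi>" by blast
    then show "\<exists>a\<in>univ M. \<exists>f. (\<forall>i<m. f i \<in> univ M) \<and>
             sat M (\<lambda>v. if v < Suc m then (f(m := a)) v else e v) \<phi>"
      by (intro bexI[of _ "f m"] exI[of _ f]) (auto simp only: fun_upd_triv less_Suc_eq)
  qed
  finally show ?case .
qed simp

lemma fv_distinct_from: "fv (distinct_from k j) \<subseteq> insert k {..<j}"
  by (induction j) auto

lemma fv_pairwise_distinct: "fv (pairwise_distinct n) \<subseteq> {..n}"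
proof (induction n)
  case (Suc n)
  then show ?case using fv_distinct_from[of n n] by force
qed simp

lemma fv_ex_prefix: "fv (ex_prefix m \<phi>) = fv \<phi> - {..<m}"
  by (induction m) (auto simp: lessThan_Suc)

lemma wf_fm_ex_prefix: "wf_fm \<sigma> (ex_prefix m \<phi>) = wf_fm \<sigma> \<phi>"
  by (induction m) auto

lemma sentence_at_least: "sentence \<sigma> (at_least n)"
proof -
  have "wf_fm \<sigma> (distinct_from k j)" for k j by (induction j) auto
  then have "wf_fm \<sigma> (pairwise_distinct n)" by (induction n) auto
  then show ?thesis
    using fv_pairwise_distinct[of n]
    by (auto simp: sentence_def at_least_def wf_fm_ex_prefix fv_ex_prefix)
qed

lemma holds_at_least_nat:
  assumes "univ M = (UNIV :: nat set)"
  shows "holds M (at_least n)"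
proof -
  have "inj_on (\<lambda>v. if v < Suc n then id v else e v) {..<n}" for e :: "nat \<Rightarrow> nat"
    by (auto intro: inj_onI)
  then show ?thesis
    unfolding holds_def at_least_def sat_ex_prefix sat_pairwise_distinct
    using assms by blast
qed

lemma infinite_if_holds_at_least:
  assumes "\<And>n. holds M (at_least n)" "univ M \<noteq> {}"
  shows "infinite (univ M)"
proof
  assume fin: "finite (univ M)"
  obtain m0 where m0: "m0 \<in> univ M" using assms(2) by auto
  define n where "n = Suc (card (univ M))"
  have "sat M (\<lambda>_. m0) (at_least n)" using assms(1) m0 unfolding holds_def by auto
  then obtain f where f: "\<forall>i<Suc n. f i \<in> univ M"
     "sat M (\<lambda>v. if v < Suc n then f v else m0) (pairwise_distinct n)"
    unfolding at_least_def sat_ex_prefix by blast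
  have "inj_on f {..<n}"
    using f(2) unfolding sat_pairwise_distinct inj_on_def by auto
  moreover have "f ` {..<n} \<subseteq> univ M" using f(1) by auto
  ultimately have "card {..<n} \<le> card (univ M)"
    using card_inj_on_le fin by blast
  then show False unfolding n_def by simp
qed

definition mate :: "nat \<Rightarrow> nat" where
  "mate n = (if even n then Suc n else n - 1)"

lemma mate_neq [simp]: "mate n \<noteq> n"
  by (auto simp: mate_def elim: oddE)

lemma mate_mate [simp]: "mate (mate n) = n"
  by (auto simp: mate_def elim: oddE)

lemma div2_eq_iff_parity_eq:
  fixes m n :: nat
  assumes "m div 2 = n div 2"
  shows "m = n \<longleftrightarrow> even m = even n"
  using assms by (metis div_mult_mod_eq even_iff_mod_2_eq_zero odd_iff_mod_2_eq_one)

lemma involution_split_representatives: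
  fixes U :: "'a::linorder set"
  assumes invol: "\<And>x. x \<in> U \<Longrightarrow> p x \<in> U \<and> p x \<noteq> x \<and> p (p x) = x"
  defines "S \<equiv> {x\<in>U. x < p x}"
  shows "U = S \<union> p ` S" and "x \<in> S \<Longrightarrow> p x \<notin> S"
proof -
  show "x \<in> S \<Longrightarrow> p x \<notin> S"
    using invol unfolding S_def by fastforce
  have "x \<in> S \<union> p ` S" if x: "x \<in> U" for x
  proof (cases "x < p x")
    case False
    then have "p x \<in> S" using invol[OF x] unfolding S_def by auto
    then show ?thesis using invol[OF x] by (metis UnI2 image_eqI)
  qed (use x S_def in auto)
  then show "U = S \<union> p ` S"
    using invol unfolding S_def by auto
qed

definition interleave :: "(nat \<Rightarrow> 'a) \<Rightarrow> ('a \<Rightarrow> 'a) \<Rightarrow> nat \<Rightarrow> 'a" where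
  "interleave en p n = (if even n then en (n div 2) else p (en (n div 2)))"

lemma interleave_mate:
  assumes "\<And>j. p (p (en j)) = en j"
  shows "interleave en p (mate n) = p (interleave en p n)"
proof (cases "even n")
  case True
  then have "mate n = Suc n" "odd (Suc n)" "Suc n div 2 = n div 2"
    by (auto simp: mate_def elim!: evenE)
  then show ?thesis using True by (simp add: interleave_def)
next
  case False
  then have "mate n = n - 1" "even (n - 1)" "(n - 1) div 2 = n div 2"
    by (auto simp: mate_def elim!: oddE)
  then show ?thesis using False assms by (simp add: interleave_def)
qed

lemma inj_interleave:
  assumes "inj en" "\<And>j. p (p (en j)) = en j" "\<And>i j. p (en i) \<noteq> en j"
  shows "inj (interleave en p)"
proof (rule injI)
  fix m n assume mn: "interleave en p m = interleave en p n"
  then have parity: "even m = even n"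
    using assms(3) unfolding interleave_def by (metis (full_types))
  have "en (m div 2) = en (n div 2)"
  proof (cases "even m")
    case False
    then have "p (en (m div 2)) = p (en (n div 2))"
      using mn parity unfolding interleave_def by simp
    then show ?thesis using assms(2) by metis
  qed (use mn parity in \<open>simp add: interleave_def\<close>)
  then have "m div 2 = n div 2"
    using assms(1) by (simp add: inj_eq)
  then show "m = n" using parity div2_eq_iff_parity_eq by blast
qed

lemma fixed_point_free_involution_conjugate_mate:
  fixes U :: "nat set"
  assumes "infinite U" and invol: "\<And>x. x \<in> U \<Longrightarrow> p x \<in> U \<and> p x \<noteq> x \<and> p (p x) = x"
  obtains k where "bij_betw k UNIV U" "\<And>n. k (mate n) = p (k n)"
proof -
  define S where "S = {x\<in>U. x < p x}"
  have U_split: "U = S \<union> p ` S" and p_notin_S: "\<And>x. x \<in> S \<Longrightarrow> p x \<notin> S"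
    using involution_split_representatives[OF invol] unfolding S_def by blast+
  then have "infinite S" using assms(1) by auto
  define en where "en = enumerate S"
  define k where "k = interleave en p"
  have en_S: "en j \<in> S" for j
    unfolding en_def using enumerate_in_set[OF \<open>infinite S\<close>] .
  have pp_en: "p (p (en j)) = en j" for j
    using en_S invol unfolding S_def by blast
  have k_mate: "k (mate n) = p (k n)" for n
    unfolding k_def using interleave_mate pp_en by blast
  have "inj k"
    unfolding k_def en_def
    by (rule inj_interleave[OF inj_enumerate[OF \<open>infinite S\<close>]])
      (use pp_en en_S p_notin_S en_def in metis)+
  moreover have "range k = U"
  proof
    show "range k \<subseteq> U" unfolding k_def interleave_def using en_S invol S_def by auto
  next
    have "en j = k (2 * j)" for j unfolding k_def interleave_def by simp
    then have "S \<subseteq> range k"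
      using enumerate_Ex[OF \<open>infinite S\<close>] en_def by (metis rangeI subsetI)
    moreover have "p x \<in> range k" if "x \<in> range k" for x
      using that k_mate by (metis rangeE rangeI)
    ultimately show "U \<subseteq> range k" using U_split by auto
  qed
  ultimately show ?thesis
    using that k_mate by (simp add: bij_betw_def)
qed

definition edge_sig :: signature where
  "edge_sig = (\<lambda>r. if r = 0 then Some 2 else None)"

definition A_apex :: "nat struc" where
  "A_apex = \<lparr>univ = {0, 1}, rel = (\<lambda>r xs. r = 0 \<and> (\<exists>z\<le>1. xs = [0, z]))\<rparr>"

definition B_comatching :: "nat struc" where
  "B_comatching = \<lparr>univ = UNIV, rel = (\<lambda>r xs. r = 0 \<and> (\<exists>y z. xs = [y, z] \<and> z \<noteq> mate y))\<rparr>"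

lemma sat_B_comatching_ex_block_if_valid_A_apex:
  assumes "ex_block \<psi>" "\<forall>e'. (\<forall>x. e' x \<in> univ A_apex) \<longrightarrow> sat A_apex e' \<psi>"
  shows "sat B_comatching e \<psi>"
proof -
  \<comment> \<open>\<open>0 \<in> I\<close> matters: the empty power would relate every tuple.\<close>
  define I where "I = insert 0 (e ` fv \<psi>)"
  define c where "c = 2 * Suc (Max I)"
  define H where
    "H v = (if \<exists>i\<in>I. v i \<noteq> 0 then LEAST i. i \<in> I \<and> v i \<noteq> 0 else c)" for v :: "nat \<Rightarrow> nat"
  define E where "E i x = (if e x = i then 1 else 0 :: nat)" for i x
  have "finite I" unfolding I_def using finite_fv by auto
  have "mate c = Suc c"
    by (simp add: c_def mate_def)
  then have mate_c_notin_I: "mate c \<notin> I"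
    using Max_ge[OF \<open>finite I\<close>] c_def by fastforce
  have H_range: "H v \<in> insert c I" for v
    unfolding H_def by (auto intro: LeastI2_ex)
  have H_cong: "H v = H w" if "\<forall>i\<in>I. v i = w i" for v w
    using that unfolding H_def by (auto intro!: arg_cong[where f = Least])
  have "power_hom I A_apex B_comatching H"
    unfolding power_hom_def
  proof (intro conjI allI impI)
    fix r vs assume coords: "\<forall>i\<in>I. rel A_apex r (map (\<lambda>v. v i) vs)"
    then obtain p q where "r = 0" "vs = [p, q]" "\<forall>i\<in>I. p i = 0"
      unfolding I_def A_apex_def by fastforce
    moreover have "H p = c" using \<open>\<forall>i\<in>I. p i = 0\<close> unfolding H_def by auto
    moreover have "H q \<noteq> mate c"
      using H_range[of q] mate_c_notin_I mate_neq[of c] by (metis insert_iff)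
    ultimately show "rel B_comatching r (map H vs)"
      unfolding B_comatching_def by auto
  qed (use H_cong in \<open>auto simp: B_comatching_def\<close>)
  moreover have "\<forall>i\<in>I. sat A_apex (E i) \<psi>"
    using assms(2) unfolding E_def A_apex_def by auto
  ultimately have "sat B_comatching (\<lambda>x. H (\<lambda>i. E i x)) \<psi>"
    using sat_power_hom_ex_block assms(1) by blast
  moreover have "H (\<lambda>i. E i x) = e x" if "x \<in> fv \<psi>" for x
    using that unfolding H_def E_def I_def by (auto intro: Least_equality)
  ultimately show ?thesis
    using sat_cong_fv[of \<psi> "\<lambda>x. H (\<lambda>i. E i x)" e] by simp
qed

definition apex_sentence :: fm where
  "apex_sentence = Ex 0 (All 1 (Atom 0 [0, 1]))"

lemma apex_sentence_in_QCSP_A_apex: "apex_sentence \<in> QCSP edge_sig A_apex"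
  unfolding QCSP_def sentence_def holds_def apex_sentence_def edge_sig_def A_apex_def
  by (auto intro!: pH.intros)

lemma apex_sentence_notin_QCSP_B_comatching: "apex_sentence \<notin> QCSP edge_sig B_comatching"
proof
  assume "apex_sentence \<in> QCSP edge_sig B_comatching"
  then have "sat B_comatching (\<lambda>_. 0) apex_sentence"
    unfolding QCSP_def holds_def B_comatching_def by simp
  then obtain a :: nat where "\<forall>z. z \<noteq> mate a"
    unfolding apex_sentence_def B_comatching_def by auto
  then show False by blast
qed

lemma Pi2_CSP_A_apex_subset_B_comatching: "Pi2_CSP edge_sig A_apex \<subseteq> Pi2_CSP edge_sig B_comatching"
  by (rule Pi2_CSP_subset_if_ex_block_transfer) (rule sat_B_comatching_ex_block_if_valid_A_apex)

lemma iso_B_comatching_if_nonneighbour_involution: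
  fixes M :: "nat struc"
  assumes "infinite (univ M)"
    and invol: "\<And>x. x \<in> univ M \<Longrightarrow> p x \<in> univ M \<and> p x \<noteq> x \<and> p (p x) = x"
    and rel_iff: "\<And>x y. x \<in> univ M \<Longrightarrow> y \<in> univ M \<Longrightarrow> rel M 0 [x, y] \<longleftrightarrow> y \<noteq> p x"
  shows "iso edge_sig M B_comatching"
proof -
  obtain k where k: "bij_betw k UNIV (univ M)" and k_mate: "\<And>n. k (mate n) = p (k n)"
    using fixed_point_free_involution_conjugate_mate[OF assms(1) invol] by blast
  define h where "h = inv_into UNIV k"
  have h: "bij_betw h (univ M) UNIV"
    using bij_betw_inv_into[OF k] unfolding h_def .
  have k_h: "k (h x) = x" if "x \<in> univ M" for x
    using bij_betw_inv_into_right[OF k that] unfolding h_def .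
  have "inj k"
    using k by (simp add: bij_betw_def)
  have rel_h: "rel M 0 [x, y] \<longleftrightarrow> rel B_comatching 0 [h x, h y]"
    if "x \<in> univ M" "y \<in> univ M" for x y
  proof -
    have "rel M 0 [x, y] \<longleftrightarrow> k (h y) \<noteq> k (mate (h x))"
      using rel_iff[OF that] k_mate[of "h x"] k_h[OF that(1)] k_h[OF that(2)] by simp
    also have "\<dots> \<longleftrightarrow> h y \<noteq> mate (h x)"
      using \<open>inj k\<close> by (simp add: inj_eq)
    finally show ?thesis unfolding B_comatching_def by simp
  qed
  show ?thesis
    unfolding iso_def
  proof (intro exI[of _ h] conjI allI impI)
    show "bij_betw h (univ M) (univ B_comatching)"
      using h unfolding B_comatching_def by simp
  next
    fix r n xs
    assume "edge_sig r = Some n" "length xs = n" "set xs \<subseteq> univ M"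
    then have "r = 0" "length xs = 2" unfolding edge_sig_def by (auto split: if_splits)
    moreover obtain x y where "xs = [x, y]"
      using \<open>length xs = 2\<close> by (auto simp: numeral_2_eq_2 length_Suc_conv)
    ultimately show "rel M r xs = rel B_comatching r (map h xs)"
      using rel_h \<open>set xs \<subseteq> univ M\<close> by simp
  qed
qed

definition ax_refl :: fm where
  "ax_refl = All 0 (Atom 0 [0, 0])"

definition ax_nonneighbour :: fm where
  "ax_nonneighbour = All 0 (Ex 1 (Neg (Atom 0 [0, 1])))"

definition ax_nonneighbour_unique :: fm where
  "ax_nonneighbour_unique =
     All 0 (All 1 (All 2 (Disj (Atom 0 [0, 1]) (Disj (Atom 0 [0, 2]) (Eq 1 2)))))"

definition ax_nonneighbour_sym :: fm where
  "ax_nonneighbour_sym = All 0 (All 1 (Disj (Atom 0 [0, 1]) (Neg (Atom 0 [1, 0]))))"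

lemma sentence_axioms:
  "sentence edge_sig ax_refl" "sentence edge_sig ax_nonneighbour"
  "sentence edge_sig ax_nonneighbour_unique" "sentence edge_sig ax_nonneighbour_sym"
  unfolding sentence_def ax_refl_def ax_nonneighbour_def ax_nonneighbour_unique_def
    ax_nonneighbour_sym_def edge_sig_def
  by auto

lemma holds_axioms_B_comatching:
  "holds B_comatching ax_refl" "holds B_comatching ax_nonneighbour"
  "holds B_comatching ax_nonneighbour_unique" "holds B_comatching ax_nonneighbour_sym"
  unfolding holds_def ax_refl_def ax_nonneighbour_def ax_nonneighbour_unique_def
    ax_nonneighbour_sym_def B_comatching_def
  by (auto simp: eq_commute[of _ "mate _"])

lemma nonneighbour_involution_if_axioms:
  assumes "sat M e ax_refl" "sat M e ax_nonneighbour"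
    "sat M e ax_nonneighbour_unique" "sat M e ax_nonneighbour_sym"
  obtains p where "\<And>x. x \<in> univ M \<Longrightarrow> p x \<in> univ M \<and> p x \<noteq> x \<and> p (p x) = x"
    "\<And>x y. x \<in> univ M \<Longrightarrow> y \<in> univ M \<Longrightarrow> rel M 0 [x, y] \<longleftrightarrow> y \<noteq> p x"
proof -
  have refl: "\<And>x. x \<in> univ M \<Longrightarrow> rel M 0 [x, x]"
    using assms(1) unfolding ax_refl_def by simp
  obtain p where p: "\<And>x. x \<in> univ M \<Longrightarrow> p x \<in> univ M \<and> \<not> rel M 0 [x, p x]"
    using assms(2) unfolding ax_nonneighbour_def by simp metis
  have unique: "y = z" if "x \<in> univ M" "y \<in> univ M" "z \<in> univ M"
    "\<not> rel M 0 [x, y]" "\<not> rel M 0 [x, z]" for x y z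
    using assms(3) that unfolding ax_nonneighbour_unique_def by auto
  have sym: "\<not> rel M 0 [y, x]" if "x \<in> univ M" "y \<in> univ M" "\<not> rel M 0 [x, y]" for x y
    using assms(4) that unfolding ax_nonneighbour_sym_def by auto
  show thesis
  proof
    fix x assume x: "x \<in> univ M"
    then have "\<not> rel M 0 [p x, x]" using p sym by blast
    then show "p x \<in> univ M \<and> p x \<noteq> x \<and> p (p x) = x"
      using p[OF x] p[of "p x"] refl[OF x] unique[of "p x" x "p (p x)"] x by auto
  next
    fix x y assume "x \<in> univ M" "y \<in> univ M"
    then show "rel M 0 [x, y] \<longleftrightarrow> y \<noteq> p x"
      using p unique[of x y "p x"] by auto
  qed
qed

lemma omega_categorical_B_comatching: "omega_categorical edge_sig B_comatching"
  unfolding omega_categorical_def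
proof (intro conjI allI impI)
  show "is_struc edge_sig B_comatching" unfolding is_struc_def B_comatching_def edge_sig_def by auto
  show "countable (univ B_comatching)" "infinite (univ B_comatching)"
    unfolding B_comatching_def by simp_all
next
  fix M :: "nat struc"
  assume "is_struc edge_sig M \<and> (\<forall>\<phi>. sentence edge_sig \<phi> \<longrightarrow> holds B_comatching \<phi> \<longrightarrow> holds M \<phi>)"
  then have "univ M \<noteq> {}"
    and th: "\<And>\<phi>. sentence edge_sig \<phi> \<Longrightarrow> holds B_comatching \<phi> \<Longrightarrow> holds M \<phi>"
    unfolding is_struc_def by auto
  then obtain m0 where m0: "m0 \<in> univ M" by auto
  have ax: "sat M (\<lambda>_. m0) \<phi>"
    if "sentence edge_sig \<phi>" "holds B_comatching \<phi>" for \<phi>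
    using th[OF that] m0 unfolding holds_def by simp
  have "infinite (univ M)"
    using infinite_if_holds_at_least[OF th[OF sentence_at_least holds_at_least_nat]] \<open>univ M \<noteq> {}\<close>
    unfolding B_comatching_def by simp
  moreover obtain p where
    "\<And>x. x \<in> univ M \<Longrightarrow> p x \<in> univ M \<and> p x \<noteq> x \<and> p (p x) = x"
    "\<And>x y. x \<in> univ M \<Longrightarrow> y \<in> univ M \<Longrightarrow> rel M 0 [x, y] \<longleftrightarrow> y \<noteq> p x"
    using nonneighbour_involution_if_axioms[OF ax[OF sentence_axioms(1) holds_axioms_B_comatching(1)]
        ax[OF sentence_axioms(2) holds_axioms_B_comatching(2)]
        ax[OF sentence_axioms(3) holds_axioms_B_comatching(3)]
        ax[OF sentence_axioms(4) holds_axioms_B_comatching(4)]] by blast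
  ultimately show "iso edge_sig M B_comatching"
    by (rule iso_B_comatching_if_nonneighbour_involution)
qed

theorem mainTheorem3:
  shows "\<exists>(\<sigma> :: signature) (A :: nat struc) (B :: nat struc).
           finite (dom \<sigma>) \<and>
           is_struc \<sigma> A \<and> finite (univ A) \<and>
           omega_categorical \<sigma> B \<and>
           Pi2_CSP \<sigma> A \<subseteq> Pi2_CSP \<sigma> B \<and>
           \<not> QCSP \<sigma> A \<subseteq> QCSP \<sigma> B"
proof (intro exI conjI)
  show "finite (dom edge_sig)" unfolding edge_sig_def dom_def by simp
  show "is_struc edge_sig A_apex" unfolding is_struc_def A_apex_def edge_sig_def by auto
  show "finite (univ A_apex)" unfolding A_apex_def by simp
  show "omega_categorical edge_sig B_comatching" by (rule omega_categorical_B_comatching)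
  show "Pi2_CSP edge_sig A_apex \<subseteq> Pi2_CSP edge_sig B_comatching" by (rule Pi2_CSP_A_apex_subset_B_comatching)
  show "\<not> QCSP edge_sig A_apex \<subseteq> QCSP edge_sig B_comatching"
    using apex_sentence_in_QCSP_A_apex apex_sentence_notin_QCSP_B_comatching by blast
qed

end
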